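(* Let $(p^*,q^*,\omega^*,\tilde\theta^*,\alpha^*,\lambda^*,\eta^*,\nu^* )$ be an optimal primal-dual solution of the planner's problem \[ \min_{p,q,\omega\in\mathbb{R}^n,\ \tilde\theta\in\mathbb{R}^{|\mathcal E|}}\ \sum_{j=1}^n J_j(p_j)+\tfrac12\omega^TD\omega \] subject to $q=p$ (multiplier $\alpha\in\mathbb{R}^n$), $\mathbf 1^T(q-d)=0$ (multiplier $\lambda\in\mathbb{R}$), $H^T(q-d)\le F$ (multiplier $\eta\in\mathbb{R}^{2|\mathcal E|}_{\ge0}$), and $q-d-D\omega-CB\tilde\theta=0$ (multiplier $\nu\in\mathbb{R}^n$). Then $q^*-d-D\omega^*-CB\tilde\theta^*=0$, $\omega^*=0$, $q^*$ is an optimal solution of $\min_q \sum_j J_j(q_j)$ s.t. $\mathbf 1^T(q-d)=0$, $H^T(q-d)\le F$, and $\nabla J(p^* )=\lambda^*\mathbf 1-H\eta^*$, where $\nabla J(p):=(J_j'(p_j))_{j=1}^n$.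
   Context: $(\mathcal N,\mathcal E)$ is a connected directed graph with $\mathcal N=\{1,\dots,n\}$; $C\in\mathbb{R}^{n\times|\mathcal E|}$ is its incidence matrix ($C_{j,e}=1$ if $e=(j,k)$, $-1$ if $e=(k,j)$, $0$ otherwise). $B$ ($|\mathcal E|\times|\mathcal E|$) and $D$ ($n\times n$) are diagonal with positive diagonal entries. $L:=CBC^T$, $L^\dagger$ its Moore–Penrose inverse, $H\in\mathbb{R}^{n\times2|\mathcal E|}$ with $H^T=\begin{bmatrix} BC^TL^\dagger\\ -BC^TL^\dagger\end{bmatrix}$, $F=\begin{bmatrix}\overline F\\-\underline F\end{bmatrix}$ for given limits $\underline F,\overline F$. $d\in\mathbb{R}^n$ is given; each $J_j$ is strictly convex and twice differentiable. The Lagrangian used to define the multipliers is $\sum_jJ_j(p_j)+\tfrac12\omega^TD\omega+\nu^T(q-d-D\omega-CB\tilde\theta)+\alpha^T(q-p)-\lambda\mathbf 1^T(q-d)+\eta^T(H^T(q-d)-F)$. *)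

theory Defs
  imports "HOL-Analysis.Analysis"
begin

definition strict_convex_on :: "real set \<Rightarrow> (real \<Rightarrow> real) \<Rightarrow> bool" where
  "strict_convex_on S f \<longleftrightarrow>
     (\<forall>x\<in>S. \<forall>y\<in>S. x \<noteq> y \<longrightarrow> (\<forall>t. 0 < t \<and> t < 1 \<longrightarrow>
        f ((1 - t) * x + t * y) < (1 - t) * f x + t * f y))"

definition pos_diag :: "real^'a^'a \<Rightarrow> bool" where
  "pos_diag M \<longleftrightarrow> (\<forall>i j. i \<noteq> j \<longrightarrow> M$i$j = 0) \<and> (\<forall>i. M$i$i > 0)"

definition pinv :: "real^'a^'a \<Rightarrow> real^'a^'a" where
  "pinv A = (THE X. A ** X ** A = A \<and> X ** A ** X = X \<and>
                    transpose (A ** X) = A ** X \<and> transpose (X ** A) = X ** A)"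

(* Directed graph: edges of type 'e, edge e = (src e, tgt e) *)
definition incidence :: "('e \<Rightarrow> 'n) \<Rightarrow> ('e \<Rightarrow> 'n) \<Rightarrow> real^'e^'n" where
  "incidence src tgt = (\<chi> j e. (if src e = j then 1 else 0) - (if tgt e = j then 1 else 0))"

definition graph_connected :: "('e \<Rightarrow> 'n) \<Rightarrow> ('e \<Rightarrow> 'n) \<Rightarrow> bool" where
  "graph_connected src tgt \<longleftrightarrow>
     (\<forall>j k. (j, k) \<in> ({(src e, tgt e) | e. True} \<union> {(tgt e, src e) | e. True})\<^sup>*)"

definition laplacian :: "real^'e^'n \<Rightarrow> real^'e^'e \<Rightarrow> real^'n^'n" where
  "laplacian C B = C ** B ** transpose C"

(* H^T = [B C^T L^dagger ; - B C^T L^dagger], rows indexed by 'e + 'e *)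
definition HT :: "real^'e^'n \<Rightarrow> real^'e^'e \<Rightarrow> real^'n^('e + 'e)" where
  "HT C B = (let M = B ** transpose C ** pinv (laplacian C B) in
             (\<chi> r. case r of Inl e \<Rightarrow> M$e | Inr e \<Rightarrow> - (M$e)))"

definition Hmat :: "real^'e^'n \<Rightarrow> real^'e^'e \<Rightarrow> real^('e + 'e)^'n" where
  "Hmat C B = transpose (HT C B)"

(* F = [Fbar ; - Funder] *)
definition Fvec :: "real^'e \<Rightarrow> real^'e \<Rightarrow> real^('e + 'e)" where
  "Fvec Fup Flo = (\<chi> r. case r of Inl e \<Rightarrow> Fup$e | Inr e \<Rightarrow> - (Flo$e))"

definition one_vec :: "real^'n" where "one_vec = (\<chi> j. 1)"

definition Jsum :: "('n \<Rightarrow> real \<Rightarrow> real) \<Rightarrow> real^'n \<Rightarrow> real" where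
  "Jsum J p = (\<Sum>j\<in>UNIV. J j (p$j))"

definition gradJ :: "('n \<Rightarrow> real \<Rightarrow> real) \<Rightarrow> real^'n \<Rightarrow> real^'n" where
  "gradJ J p = (\<chi> j. deriv (J j) (p$j))"

definition planner_obj :: "('n \<Rightarrow> real \<Rightarrow> real) \<Rightarrow> real^'n^'n \<Rightarrow> real^'n \<Rightarrow> real^'n \<Rightarrow> real" where
  "planner_obj J D p \<omega> = Jsum J p + (1/2) * (\<omega> \<bullet> (D *v \<omega>))"

definition lagrangian ::
  "('n \<Rightarrow> real \<Rightarrow> real) \<Rightarrow> real^'e^'n \<Rightarrow> real^'e^'e \<Rightarrow> real^'n^'n \<Rightarrow> real^'n \<Rightarrow> real^('e+'e) \<Rightarrow>
   real^'n \<Rightarrow> real^'n \<Rightarrow> real^'n \<Rightarrow> real^'e \<Rightarrow>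
   real^'n \<Rightarrow> real \<Rightarrow> real^('e+'e) \<Rightarrow> real^'n \<Rightarrow> real" where
  "lagrangian J C B D d F p q \<omega> \<theta> \<alpha> lam \<eta> \<nu> =
     planner_obj J D p \<omega>
     + \<nu> \<bullet> (q - d - D *v \<omega> - (C ** B) *v \<theta>)
     + \<alpha> \<bullet> (q - p)
     - lam * (one_vec \<bullet> (q - d))
     + \<eta> \<bullet> (HT C B *v (q - d) - F)"

(* Optimal primal-dual solution = saddle point of the Lagrangian over
   all primal variables and all multipliers with \<eta> \<ge> 0 *)
definition planner_opt_pd where
  "planner_opt_pd J C B D d F p q \<omega> \<theta> \<alpha> lam \<eta> \<nu> \<longleftrightarrow>
     (\<forall>i. \<eta>$i \<ge> 0) \<and>
     (\<forall>\<alpha>' lam' \<eta>' \<nu>'. (\<forall>i. \<eta>'$i \<ge> 0) \<longrightarrow>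
        lagrangian J C B D d F p q \<omega> \<theta> \<alpha>' lam' \<eta>' \<nu>' \<le>
        lagrangian J C B D d F p q \<omega> \<theta> \<alpha> lam \<eta> \<nu>) \<and>
     (\<forall>p' q' \<omega>' \<theta>'.
        lagrangian J C B D d F p q \<omega> \<theta> \<alpha> lam \<eta> \<nu> \<le>
        lagrangian J C B D d F p' q' \<omega>' \<theta>' \<alpha> lam \<eta> \<nu>)"

definition reduced_feasible where
  "reduced_feasible C B d F q \<longleftrightarrow>
     one_vec \<bullet> (q - d) = 0 \<and> (\<forall>i. (HT C B *v (q - d))$i \<le> F$i)"

definition reduced_optimal where
  "reduced_optimal J C B d F q \<longleftrightarrow> reduced_feasible C B d F q \<and>
     (\<forall>q'. reduced_feasible C B d F q' \<longrightarrow> Jsum J q \<le> Jsum J q')"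

end

theory Submission
  imports Defs
begin

(* The saddle-point property of the Lagrangian contains all KKT conditions: maximality in the
   multipliers gives primal feasibility and complementary slackness, minimality in the primal
   variables gives stationarity.  Stationarity in \<theta> puts \<nu> in the left kernel of C B, so \<nu> is
   constant on the connected graph, and stationarity in \<omega> gives \<omega> = \<nu>.  Pairing \<nu> with the
   (satisfied) power-flow constraint then leaves \<nu>\<^sup>T D \<nu> = 0, hence \<nu> = \<omega> = 0; once \<nu> = 0 the
   Lagrangian at any reduced-feasible q' is at most the reduced objective at q'. *)

lemma inner_bounded_above_imp_zero:
  fixes g x :: "'a::real_inner"
  assumes "\<And>y. y \<bullet> g \<le> x \<bullet> g"
  shows "g = 0"
proof -
  have "(x + g) \<bullet> g \<le> x \<bullet> g" by (rule assms)
  then have "g \<bullet> g \<le> 0" by (simp add: inner_add_left)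
  then show ?thesis by (metis inner_gt_zero_iff not_le)
qed

lemma inner_bounded_below_imp_zero:
  fixes g x :: "'a::real_inner"
  assumes "\<And>y. x \<bullet> g \<le> y \<bullet> g"
  shows "g = 0"
proof -
  have "x \<bullet> g \<le> (x - g) \<bullet> g" by (rule assms)
  then have "g \<bullet> g \<le> 0" by (simp add: inner_diff_left)
  then show ?thesis by (metis inner_gt_zero_iff not_le)
qed

lemma inner_nonneg_nonpos:
  fixes \<eta> h :: "real^'i"
  assumes "\<forall>i. 0 \<le> \<eta>$i" and "\<forall>i. h$i \<le> 0"
  shows "\<eta> \<bullet> h \<le> 0"
  unfolding inner_vec_def using assms by (simp add: sum_nonpos mult_nonneg_nonpos)

lemma complementary_slackness:
  fixes \<eta> h :: "real^'i"
  assumes \<eta>_nonneg: "\<forall>i. 0 \<le> \<eta>$i"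
    and max: "\<And>\<eta>'. \<forall>i. 0 \<le> \<eta>'$i \<Longrightarrow> \<eta>' \<bullet> h \<le> \<eta> \<bullet> h"
  shows "\<forall>i. h$i \<le> 0" and "\<eta> \<bullet> h = 0"
proof -
  show h_nonpos: "\<forall>i. h$i \<le> 0"
  proof
    fix i
    have "(\<eta> + axis i 1) \<bullet> h \<le> \<eta> \<bullet> h"
      by (rule max) (use \<eta>_nonneg in \<open>simp add: axis_def\<close>)
    then show "h$i \<le> 0" by (simp add: inner_add_left inner_axis')
  qed
  have "0 \<le> \<eta> \<bullet> h" using max[of 0] by simp
  with inner_nonneg_nonpos[OF \<eta>_nonneg h_nonpos] show "\<eta> \<bullet> h = 0" by simp
qed

lemma pos_diag_transpose: "pos_diag D \<Longrightarrow> transpose D = D"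
  by (simp add: pos_diag_def transpose_def vec_eq_iff) metis

lemma pos_diag_mult_vec_nth:
  assumes "pos_diag D"
  shows "(D *v x) $ i = D$i$i * x$i"
proof -
  have "(D *v x) $ i = (\<Sum>j\<in>UNIV. D$i$j * x$j)"
    by (simp add: matrix_vector_mult_def)
  also have "\<dots> = (\<Sum>j\<in>UNIV. if j = i then D$i$i * x$i else 0)"
    by (rule sum.cong) (use assms in \<open>auto simp: pos_diag_def\<close>)
  finally show ?thesis by simp
qed

lemma pos_diag_vector_mult_eq_0:
  assumes "pos_diag D" and "x v* D = 0"
  shows "x = 0"
proof -
  have "D$i$i * x$i = 0" for i
    using assms pos_diag_mult_vec_nth[OF assms(1)]
    by (metis transpose_matrix_vector pos_diag_transpose zero_index)
  moreover have "D$i$i > 0" for i using assms(1) by (simp add: pos_diag_def)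
  ultimately have "x$i = 0" for i by (metis less_irrefl mult_eq_0_iff)
  then show ?thesis by (simp add: vec_eq_iff)
qed

lemma pos_diag_inner_commute:
  assumes "pos_diag D"
  shows "y \<bullet> (D *v x) = x \<bullet> (D *v y)"
  by (metis assms dot_lmul_matrix inner_commute pos_diag_transpose transpose_matrix_vector)

lemma pos_diag_quadratic_pos:
  assumes "pos_diag D" and "x \<noteq> 0"
  shows "0 < x \<bullet> (D *v x)"
proof -
  obtain i where "x$i \<noteq> 0" using assms(2) by (auto simp: vec_eq_iff)
  moreover have "D$k$k > 0" for k using assms(1) by (simp add: pos_diag_def)
  ultimately have "0 < (\<Sum>k\<in>UNIV. D$k$k * (x$k)\<^sup>2)"
    by (intro sum_pos2[where i=i]) (auto simp: less_imp_le)
  then show ?thesis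
    by (simp add: inner_vec_def pos_diag_mult_vec_nth[OF assms(1)] power2_eq_square mult.left_commute)
qed

lemma pos_diag_quadratic_argmin:
  fixes \<omega> \<nu> :: "real^'n"
  assumes D: "pos_diag D"
    and min: "(1/2) * (\<omega> \<bullet> (D *v \<omega>)) - \<nu> \<bullet> (D *v \<omega>) \<le> (1/2) * (\<nu> \<bullet> (D *v \<nu>)) - \<nu> \<bullet> (D *v \<nu>)"
  shows "\<omega> = \<nu>"
proof (rule ccontr)
  assume "\<omega> \<noteq> \<nu>"
  then have "0 < (\<omega> - \<nu>) \<bullet> (D *v (\<omega> - \<nu>))"
    using pos_diag_quadratic_pos[OF D] by simp
  also have "\<dots> = \<omega> \<bullet> (D *v \<omega>) - 2 * (\<nu> \<bullet> (D *v \<omega>)) + \<nu> \<bullet> (D *v \<nu>)"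
    using pos_diag_inner_commute[OF D, of \<omega> \<nu>]
    by (simp add: matrix_vector_mult_diff_distrib inner_diff_left inner_diff_right)
  finally show False using min by simp
qed

lemma vector_mult_incidence_nth:
  "(\<nu> v* incidence src tgt) $ e = \<nu>$(src e) - \<nu>$(tgt e)"
  by (simp add: vector_matrix_mult_def incidence_def right_diff_distrib sum_subtractf
      if_distrib[where f="\<lambda>c. _ * c"] cong: if_cong)

lemma incidence_left_null_imp_constant:
  assumes "graph_connected src tgt" and "\<nu> v* incidence src tgt = 0"
  shows "\<nu>$j = \<nu>$k"
proof -
  have edge: "\<nu>$(src e) = \<nu>$(tgt e)" for e
    using arg_cong[OF assms(2), of "\<lambda>v. v$e"] by (simp add: vector_mult_incidence_nth)
  have "(j, k) \<in> ({(src e, tgt e) | e. True} \<union> {(tgt e, src e) | e. True})\<^sup>*"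
    using assms(1) unfolding graph_connected_def by blast
  then show ?thesis
    by (induction rule: rtrancl_induct) (auto simp: edge)
qed

lemma Jsum_minimal_imp_coordinate_minimal:
  assumes "\<And>p'. Jsum J p \<le> Jsum J p'"
  shows "J j (p$j) \<le> J j y"
proof -
  define p' where "p' = (\<chi> k. if k = j then y else p$k)"
  have "Jsum J p' - Jsum J p = (\<Sum>k\<in>UNIV. if k = j then J j y - J j (p$j) else 0)"
    unfolding Jsum_def sum_subtractf[symmetric] p'_def by (rule sum.cong) auto
  then show ?thesis using assms[of p'] by simp
qed

lemma Jsum_minus_inner: "Jsum J p - \<alpha> \<bullet> p = Jsum (\<lambda>j x. J j x - \<alpha>$j * x) p"
  by (simp add: Jsum_def inner_vec_def sum_subtractf mult.commute)

lemma Jsum_tilted_minimal_imp_gradJ: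
  assumes diff: "\<And>j x. J j differentiable (at x)"
    and min: "\<And>p'. Jsum J p - \<alpha> \<bullet> p \<le> Jsum J p' - \<alpha> \<bullet> p'"
  shows "gradJ J p = \<alpha>"
proof -
  have "deriv (J j) (p$j) = \<alpha>$j" for j
  proof -
    have "DERIV (J j) (p$j) :> deriv (J j) (p$j)"
      using diff DERIV_deriv_iff_real_differentiable by blast
    then have tilted_deriv: "DERIV (\<lambda>x. J j x - \<alpha>$j * x) (p$j) :> deriv (J j) (p$j) - \<alpha>$j"
      by (auto intro!: derivative_eq_intros)
    have tilted_min: "J j (p$j) - \<alpha>$j * p$j \<le> J j y - \<alpha>$j * y" for y
      using Jsum_minimal_imp_coordinate_minimal[of "\<lambda>j x. J j x - \<alpha>$j * x" p j y] min
      by (simp add: Jsum_minus_inner)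
    have "deriv (J j) (p$j) - \<alpha>$j = 0"
      using DERIV_local_min[OF tilted_deriv, of 1] tilted_min by auto
    then show ?thesis by simp
  qed
  then show ?thesis by (simp add: gradJ_def vec_eq_iff)
qed

lemma planner_opt_pd_primal_feasible:
  assumes opt: "planner_opt_pd J C B D d F p q \<omega> \<theta> \<alpha> lam \<eta> \<nu>"
  shows "q - d - D *v \<omega> - (C ** B) *v \<theta> = 0"
    and "q = p"
    and "one_vec \<bullet> (q - d) = 0"
    and "\<forall>i. (HT C B *v (q - d))$i \<le> F$i"
    and "\<eta> \<bullet> (HT C B *v (q - d) - F) = 0"
proof -
  have \<eta>_nonneg: "\<forall>i. 0 \<le> \<eta>$i"
    and max: "\<And>\<alpha>' lam' \<eta>' \<nu>'. \<forall>i. 0 \<le> \<eta>'$i \<Longrightarrow>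
      lagrangian J C B D d F p q \<omega> \<theta> \<alpha>' lam' \<eta>' \<nu>' \<le> lagrangian J C B D d F p q \<omega> \<theta> \<alpha> lam \<eta> \<nu>"
    using opt unfolding planner_opt_pd_def by auto
  show "q - d - D *v \<omega> - (C ** B) *v \<theta> = 0"
    using max[OF \<eta>_nonneg, of \<alpha> lam]
    by (intro inner_bounded_above_imp_zero[of _ \<nu>]) (simp add: lagrangian_def)
  have "q - p = 0"
    using max[OF \<eta>_nonneg, of _ lam \<nu>]
    by (intro inner_bounded_above_imp_zero[of _ \<alpha>]) (simp add: lagrangian_def)
  then show "q = p" by simp
  have "- (one_vec \<bullet> (q - d)) = 0"
    using max[OF \<eta>_nonneg, of \<alpha> _ \<nu>]
    by (intro inner_bounded_above_imp_zero[of _ lam]) (simp add: lagrangian_def)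
  then show "one_vec \<bullet> (q - d) = 0" by simp
  have "\<forall>i. (HT C B *v (q - d) - F)$i \<le> 0" and "\<eta> \<bullet> (HT C B *v (q - d) - F) = 0"
    using max[of _ \<alpha> lam \<nu>] by (intro complementary_slackness[OF \<eta>_nonneg]; simp add: lagrangian_def)+
  then show "\<forall>i. (HT C B *v (q - d))$i \<le> F$i" and "\<eta> \<bullet> (HT C B *v (q - d) - F) = 0"
    by simp_all
qed

lemma planner_opt_pd_stationary:
  assumes opt: "planner_opt_pd J C B D d F p q \<omega> \<theta> \<alpha> lam \<eta> \<nu>"
    and D: "pos_diag D"
  shows "\<nu> v* (C ** B) = 0"
    and "\<omega> = \<nu>"
    and "\<nu> + \<alpha> - lam *\<^sub>R one_vec + \<eta> v* HT C B = 0"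
proof -
  have min: "\<And>p' q' \<omega>' \<theta>'. lagrangian J C B D d F p q \<omega> \<theta> \<alpha> lam \<eta> \<nu>
      \<le> lagrangian J C B D d F p' q' \<omega>' \<theta>' \<alpha> lam \<eta> \<nu>"
    using opt unfolding planner_opt_pd_def by auto
  show "\<nu> v* (C ** B) = 0"
    using min[of p q \<omega>]
    by (intro inner_bounded_above_imp_zero[of _ \<theta>])
      (simp add: lagrangian_def inner_diff_right dot_lmul_matrix[symmetric] inner_commute)
  show "\<omega> = \<nu>"
    using min[of p q \<nu> \<theta>]
    by (intro pos_diag_quadratic_argmin[OF D]) (simp add: lagrangian_def planner_obj_def inner_diff_right)
  show "\<nu> + \<alpha> - lam *\<^sub>R one_vec + \<eta> v* HT C B = 0" (is "?r = 0")
  proof (rule inner_bounded_below_imp_zero[of q])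
    fix y
    have r_inner: "?r \<bullet> x = \<nu> \<bullet> x + \<alpha> \<bullet> x - lam * (one_vec \<bullet> x) + \<eta> \<bullet> (HT C B *v x)" for x
      by (simp add: inner_add_left inner_diff_left dot_lmul_matrix)
    have "?r \<bullet> q \<le> ?r \<bullet> y"
      using min[of p y \<omega> \<theta>] unfolding r_inner
      by (simp add: lagrangian_def inner_diff_right matrix_vector_mult_diff_distrib algebra_simps)
    then show "q \<bullet> ?r \<le> y \<bullet> ?r" by (simp add: inner_commute)
  qed
qed

lemma planner_opt_pd_gradJ:
  assumes opt: "planner_opt_pd J C B D d F p q \<omega> \<theta> \<alpha> lam \<eta> \<nu>"
    and diff: "\<And>j x. J j differentiable (at x)"
  shows "gradJ J p = \<alpha>"
proof -
  have min: "\<And>p'. lagrangian J C B D d F p q \<omega> \<theta> \<alpha> lam \<eta> \<nu>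
      \<le> lagrangian J C B D d F p' q \<omega> \<theta> \<alpha> lam \<eta> \<nu>"
    using opt unfolding planner_opt_pd_def by auto
  show ?thesis
    using min
    by (intro Jsum_tilted_minimal_imp_gradJ[OF diff])
      (simp add: lagrangian_def planner_obj_def inner_diff_right)
qed

lemma planner_opt_pd_constant_multiplier_eq_0:
  assumes opt: "planner_opt_pd J C B D d F p q \<omega> \<theta> \<alpha> lam \<eta> \<nu>"
    and D: "pos_diag D"
    and const: "\<And>j k. \<nu>$j = \<nu>$k"
  shows "\<nu> = 0"
proof (rule ccontr)
  assume "\<nu> \<noteq> 0"
  have "\<nu> = \<nu>$undefined *\<^sub>R one_vec"
    using const by (simp add: vec_eq_iff one_vec_def)
  then have "\<nu> \<bullet> (q - d) = 0"
    using planner_opt_pd_primal_feasible(3)[OF opt] by (metis inner_scaleR_left mult_zero_right)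
  then have "\<nu> \<bullet> (D *v \<nu>) =
      - \<nu> \<bullet> (q - d - D *v \<omega> - (C ** B) *v \<theta>) - (\<nu> v* (C ** B)) \<bullet> \<theta>"
    using planner_opt_pd_stationary(2)[OF opt D] by (simp add: inner_diff_right dot_lmul_matrix)
  also have "\<dots> = 0"
    using planner_opt_pd_primal_feasible(1)[OF opt] planner_opt_pd_stationary(1)[OF opt D] by simp
  finally show False
    using pos_diag_quadratic_pos[OF D \<open>\<nu> \<noteq> 0\<close>] by simp
qed

lemma planner_opt_pd_reduced_optimal:
  assumes opt: "planner_opt_pd J C B D d F p q \<omega> \<theta> \<alpha> lam \<eta> \<nu>"
    and D: "pos_diag D"
    and \<nu>_0: "\<nu> = 0"
  shows "reduced_optimal J C B d F q"
  unfolding reduced_optimal_def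
proof (intro conjI allI impI)
  show "reduced_feasible C B d F q"
    using planner_opt_pd_primal_feasible(3,4)[OF opt] by (simp add: reduced_feasible_def)
  fix q' assume feasible': "reduced_feasible C B d F q'"
  have "Jsum J q = lagrangian J C B D d F p q \<omega> \<theta> \<alpha> lam \<eta> \<nu>"
    using planner_opt_pd_primal_feasible[OF opt] planner_opt_pd_stationary(2)[OF opt D] \<nu>_0
    by (simp add: lagrangian_def planner_obj_def)
  also have "\<dots> \<le> lagrangian J C B D d F q' q' 0 \<theta> \<alpha> lam \<eta> \<nu>"
    using opt unfolding planner_opt_pd_def by blast
  also have "\<dots> = Jsum J q' + \<eta> \<bullet> (HT C B *v (q' - d) - F)"
    using feasible' \<nu>_0 by (simp add: lagrangian_def planner_obj_def reduced_feasible_def)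
  also have "\<dots> \<le> Jsum J q'"
    using opt feasible' inner_nonneg_nonpos[of \<eta> "HT C B *v (q' - d) - F"]
    by (simp add: planner_opt_pd_def reduced_feasible_def)
  finally show "Jsum J q \<le> Jsum J q'" .
qed

theorem corollary1:
  fixes src tgt :: "'e::finite \<Rightarrow> 'n::finite"
    and B :: "real^'e^'e" and D :: "real^'n^'n"
    and J :: "'n \<Rightarrow> real \<Rightarrow> real"
    and d :: "real^'n" and Fup Flo :: "real^'e"
    and p q \<omega> \<alpha> \<nu> :: "real^'n" and \<theta> :: "real^'e"
    and lam :: real and \<eta> :: "real^('e + 'e)"
  assumes simple: "inj (\<lambda>e. (src e, tgt e))"
    and conn: "graph_connected src tgt"
    and B_diag: "pos_diag B" and D_diag: "pos_diag D"
    and J_sc: "\<And>j. strict_convex_on UNIV (J j)"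
    and J_d1: "\<And>j x. J j differentiable (at x)"
    and J_d2: "\<And>j x. deriv (J j) differentiable (at x)"
    and opt: "planner_opt_pd J (incidence src tgt) B D d (Fvec Fup Flo) p q \<omega> \<theta> \<alpha> lam \<eta> \<nu>"
  shows "q - d - D *v \<omega> - (incidence src tgt ** B) *v \<theta> = 0
         \<and> \<omega> = 0
         \<and> reduced_optimal J (incidence src tgt) B d (Fvec Fup Flo) q
         \<and> gradJ J p = lam *\<^sub>R one_vec - Hmat (incidence src tgt) B *v \<eta>"
proof -
  let ?C = "incidence src tgt"
  have "(\<nu> v* ?C) v* B = 0"
    using planner_opt_pd_stationary(1)[OF opt D_diag] by (simp add: vector_matrix_mul_assoc)
  then have "\<nu> v* ?C = 0"
    by (rule pos_diag_vector_mult_eq_0[OF B_diag])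
  then have \<nu>_0: "\<nu> = 0"
    using planner_opt_pd_constant_multiplier_eq_0[OF opt D_diag] incidence_left_null_imp_constant[OF conn]
    by blast
  have "\<omega> = 0"
    using planner_opt_pd_stationary(2)[OF opt D_diag] \<nu>_0 by simp
  moreover have "gradJ J p = lam *\<^sub>R one_vec - Hmat ?C B *v \<eta>"
    using planner_opt_pd_gradJ[OF opt J_d1] planner_opt_pd_stationary(3)[OF opt D_diag] \<nu>_0
    by (simp add: Hmat_def algebra_simps)
  ultimately show ?thesis
    using planner_opt_pd_primal_feasible(1)[OF opt] planner_opt_pd_reduced_optimal[OF opt D_diag \<nu>_0]
    by blast
qed

end
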